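(* Let $\mathbb{F}$ be a field of characteristic zero. Fix $K\in\mathbb{N}$ and $\mu\vdash 4K$. There exists an integer $M_K\geq 3K$ such that for every $n\geq M_K$ the following holds: if $T$ is a standard tableau of shape $\mu^{(n-3K)}$, $O\in\Omega_{n,n+K}$, and $P:=\mathrm{Sub}^T_{(x,y)}(P_O)$, then for every monomial $u$ occurring in $P$ there exists a polynomial $p(x)\in\mathbb{F}[x]$ such that $\mathrm{Coef}_{u^{(s)}}(P^{(s)})=p(s)\cdot s!$ for every $s\in\mathbb{Z}_{\geq 0}$.
   Context: $\mathbb{F}\langle Y\rangle$ is the free non-unitary associative algebra on $Y=\{y_1,y_2,\dots\}$; $\mathrm{Coef}_u(P)$ is the coefficient of the monomial $u$ in $P$. A standard tableau $T$ of shape $\nu\vdash m$ is the Young diagram of $\nu$ filled with $1,\dots,m$ increasing along rows and columns; $\mathrm{Sub}^T_{(x,y)}$ is the homomorphism $x_j\mapsto y_{i_j}$, $i_j$ the row of $T$ containing $j$. For $\nu=(\nu_1,\dots,\nu_r)$, $\nu^{(s)}=(\nu_1+s,\nu_2,\dots,\nu_r)$. $\Omega_{n,m}$ is the set of ordered partitions $O=\{A_1,\dots,A_n\}$ of $[m]$ into $n$ nonempty ordered lists (underlying sets disjoint with union $[m]$); $x_A=x_ax_b\cdots x_c$ for $A=[\![ab\cdots c]\!]$; $P_n(z_1,\dots,z_n)=\sum_{\sigma\in S_n}z_{\sigma(1)}\cdots z_{\sigma(n)}$, $P_O=P_n(x_{A_1},\dots,x_{A_n})$, so $P=P_n(m_1,\dots,m_n)$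 with $m_k=\mathrm{Sub}^T_{(x,y)}(x_{A_k})$, and $P^{(s)}:=P_{n+s}(m_1,\dots,m_n,y_1,\dots,y_1)$ ($s$ copies of $y_1$). For a monomial $u$, a submonomial is $v$ with $u=gvh$ for monomials $g,h$ (possibly empty); the central part $\mathrm{C}(u)$ is the longest submonomial of the form $y_1^r$ (leftmost one if several); writing $u=g\,\mathrm{C}(u)\,h$, $u^{(s)}:=g\,y_1^{s}\mathrm{C}(u)\,h$. *)

theory Defs
  imports "HOL-Combinatorics.Permutations" "HOL-Computational_Algebra.Polynomial"
begin

text \<open>Monomials of the free non-unitary algebra on Y = {y_1, y_2, ...} are words,
  represented as lists of variable indices (y_i is the number i, so y_1 is 1).
  A noncommutative polynomial is represented by its coefficient function on words.\<close>

definition is_partition :: "nat list \<Rightarrow> bool" where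
  "is_partition \<nu> \<longleftrightarrow> sorted_wrt (\<ge>) \<nu> \<and> 0 \<notin> set \<nu>"

definition shift_first :: "nat \<Rightarrow> nat list \<Rightarrow> nat list" where
  "shift_first s \<nu> = (case \<nu> of [] \<Rightarrow> (if s = 0 then [] else [s]) | a # r \<Rightarrow> (a + s) # r)"

text \<open>Young diagram, cells (row, column), 1-based.\<close>
definition diagram :: "nat list \<Rightarrow> (nat \<times> nat) set" where
  "diagram \<nu> = {(i, c). 1 \<le> i \<and> i \<le> length \<nu> \<and> 1 \<le> c \<and> c \<le> \<nu> ! (i - 1)}"

definition standard_tableau :: "nat list \<Rightarrow> (nat \<times> nat \<Rightarrow> nat) \<Rightarrow> bool" where
  "standard_tableau \<nu> T \<longleftrightarrow>
     bij_betw T (diagram \<nu>) {1..sum_list \<nu>} \<and>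
     (\<forall>i c. (i, c) \<in> diagram \<nu> \<and> (i, c + 1) \<in> diagram \<nu> \<longrightarrow> T (i, c) < T (i, c + 1)) \<and>
     (\<forall>i c. (i, c) \<in> diagram \<nu> \<and> (i + 1, c) \<in> diagram \<nu> \<longrightarrow> T (i, c) < T (i + 1, c))"

definition row_of :: "nat list \<Rightarrow> (nat \<times> nat \<Rightarrow> nat) \<Rightarrow> nat \<Rightarrow> nat" where
  "row_of \<nu> T j = fst (the_inv_into (diagram \<nu>) T j)"

definition Omega :: "nat \<Rightarrow> nat \<Rightarrow> nat list list set" where
  "Omega n m = {Os. length Os = n \<and> (\<forall>A \<in> set Os. A \<noteq> []) \<and> distinct (concat Os) \<and>
                   set (concat Os) = {1..m}}"

text \<open>m_k = Sub^T (x_{A_k}) for the blocks A_k of Os.\<close>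
definition sub_blocks :: "nat list \<Rightarrow> (nat \<times> nat \<Rightarrow> nat) \<Rightarrow> nat list list \<Rightarrow> nat list list" where
  "sub_blocks \<nu> T Os = map (map (row_of \<nu> T)) Os"

text \<open>P_n(z_1,...,z_n) = sum over sigma in S_n of z_{sigma(1)}...z_{sigma(n)} for monomials z_k,
  given by its coefficient function: Coef_u(P_n(zs)).\<close>
definition Pn_coef :: "nat list list \<Rightarrow> nat list \<Rightarrow> 'a::field_char_0" where
  "Pn_coef zs u = of_nat (card {\<sigma>. \<sigma> permutes {..<length zs} \<and>
                                  concat (map (\<lambda>i. zs ! \<sigma> i) [0..<length zs]) = u})"

text \<open>Central part: longest run y_1^r (leftmost if several), u = g C(u) h.\<close>
definition run_at :: "nat list \<Rightarrow> nat \<Rightarrow> nat \<Rightarrow> bool" where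
  "run_at u i r \<longleftrightarrow> i + r \<le> length u \<and> (\<forall>j < r. u ! (i + j) = 1)"

definition central_len :: "nat list \<Rightarrow> nat" where
  "central_len u = Max {r. \<exists>i. run_at u i r}"

definition central_start :: "nat list \<Rightarrow> nat" where
  "central_start u = (LEAST i. run_at u i (central_len u))"

definition ushift :: "nat \<Rightarrow> nat list \<Rightarrow> nat list" where
  "ushift s u = take (central_start u) u @ replicate s 1 @ drop (central_start u) u"

end

theory Submission
  imports Defs "HOL-Combinatorics.Multiset_Permutations"
begin

(* Grouping equal blocks, Coef_w(P_n(z_1,...,z_n)) is the product of the factorials of the
   multiplicities of the blocks times the number of factorizations of w into the multiset of
   blocks. In P^(s) the block y_1 has multiplicity d + s, which contributes
   (d + s)! = s! (s + 1) ... (s + d), and u^(s) = g y_1^(L + s) h with L = |C(u)|. So it suffices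
   that the number of factorizations of g y_1^(L + s) h into the remaining blocks B together with
   d + s copies of y_1 is polynomial in s whenever the blocks of B have total length at most L.
   This goes by induction on |B| and then on |g|: splitting off a first block from B leaves an
   instance of the same shape with fewer blocks, splitting off a first y_1 shortens g, and for
   empty g it gives F(s + 1) = F(s) + G(s + 1) with G polynomial, so F is polynomial as well.
   The length condition holds for large n: the blocks of B have total length at most 2K + 4K,
   and only the at most 4K entries outside the first row of T produce letters other than y_1,
   so the n + K letters of u contain a run of y_1 of length at least 6K. *)

section \<open>Polynomial sequences\<close>

definition poly_seq :: "(nat \<Rightarrow> 'a::comm_semiring_1) \<Rightarrow> bool" where
  "poly_seq f \<longleftrightarrow> (\<exists>p. \<forall>s. f s = poly p (of_nat s))"

lemma poly_seqI: "(\<And>s. f s = poly p (of_nat s)) \<Longrightarrow> poly_seq f"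
  unfolding poly_seq_def by blast

lemma poly_seqE:
  assumes "poly_seq f"
  obtains p where "\<And>s. f s = poly p (of_nat s)"
  using assms unfolding poly_seq_def by blast

lemma poly_seq_const: "poly_seq (\<lambda>_. c)"
  by (rule poly_seqI[of _ "[:c:]"]) simp

lemma poly_seq_of_nat: "poly_seq of_nat"
  by (rule poly_seqI[of _ "[:0, 1:]"]) simp

lemma poly_seq_add: "poly_seq f \<Longrightarrow> poly_seq g \<Longrightarrow> poly_seq (\<lambda>s. f s + g s)"
  by (elim poly_seqE, rule poly_seqI[of _ "_ + _"]) simp

lemma poly_seq_mult: "poly_seq f \<Longrightarrow> poly_seq g \<Longrightarrow> poly_seq (\<lambda>s. f s * g s)"
  by (elim poly_seqE, rule poly_seqI[of _ "_ * _"]) simp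

lemma poly_seq_diff:
  fixes f g :: "nat \<Rightarrow> 'a::comm_ring_1"
  shows "poly_seq f \<Longrightarrow> poly_seq g \<Longrightarrow> poly_seq (\<lambda>s. f s - g s)"
  by (elim poly_seqE, rule poly_seqI[of _ "_ - _"]) simp

lemma poly_seq_power: "poly_seq f \<Longrightarrow> poly_seq (\<lambda>s. f s ^ k)"
  by (induction k) (simp_all add: poly_seq_const poly_seq_mult)

lemma poly_seq_sum: "(\<And>i. i \<in> I \<Longrightarrow> poly_seq (f i)) \<Longrightarrow> poly_seq (\<lambda>s. \<Sum>i\<in>I. f i s)"
  by (induction I rule: infinite_finite_induct) (auto intro: poly_seq_const poly_seq_add)

lemma poly_seq_Suc: "poly_seq f \<Longrightarrow> poly_seq (\<lambda>s. f (Suc s))"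
  by (elim poly_seqE, rule poly_seqI[of _ "pcompose _ [:1, 1:]"]) (simp add: poly_pcompose)

lemma poly_seq_pochhammer: "poly_seq (\<lambda>s. pochhammer (of_nat s + c) d)"
  by (induction d)
    (auto simp: pochhammer_rec' intro!: poly_seq_mult poly_seq_add poly_seq_const poly_seq_of_nat)

lemma poly_seq_power_sums: "poly_seq (\<lambda>n. \<Sum>k<n. of_nat k ^ d :: 'a::field_char_0)"
proof (induction d rule: less_induct)
  case (less d)
  text \<open>Telescope the binomial expansion of (k + 1)^(d+1) - k^(d+1).\<close>
  have expand: "of_nat n ^ Suc d =
      (\<Sum>j<Suc d. of_nat (Suc d choose j) * (\<Sum>k<n. of_nat k ^ j :: 'a))" for n
  proof -
    have "(of_nat n :: 'a) ^ Suc d = (\<Sum>k<n. of_nat (Suc k) ^ Suc d - of_nat k ^ Suc d)"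
      using sum_lessThan_telescope[of "\<lambda>k. (of_nat k :: 'a) ^ Suc d" n] by simp
    also have "\<dots> = (\<Sum>k<n. \<Sum>j<Suc d. of_nat (Suc d choose j) * of_nat k ^ j)"
    proof (intro sum.cong refl)
      fix k
      have "(of_nat (Suc k) :: 'a) ^ Suc d = (\<Sum>j\<le>Suc d. of_nat (Suc d choose j) * of_nat k ^ j)"
        using binomial_ring[of "of_nat k :: 'a" 1 "Suc d"] by (simp add: add.commute)
      then show "of_nat (Suc k) ^ Suc d - of_nat k ^ Suc d =
          (\<Sum>j<Suc d. of_nat (Suc d choose j) * (of_nat k :: 'a) ^ j)"
        by (simp add: lessThan_Suc_atMost[symmetric])
    qed
    finally show ?thesis
      by (subst (asm) sum.swap) (simp add: sum_distrib_left)
  qed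
  have "(\<Sum>k<n. of_nat k ^ d) =
      (of_nat n ^ Suc d - (\<Sum>j<d. of_nat (Suc d choose j) * (\<Sum>k<n. of_nat k ^ j)))
        * inverse (of_nat (Suc d) :: 'a)" for n
    unfolding expand by (simp del: of_nat_Suc)
  moreover have "poly_seq (\<lambda>n.
      (of_nat n ^ Suc d - (\<Sum>j<d. of_nat (Suc d choose j) * (\<Sum>k<n. of_nat k ^ j)))
        * inverse (of_nat (Suc d) :: 'a))"
    using less by (intro poly_seq_mult poly_seq_diff poly_seq_power poly_seq_sum poly_seq_of_nat
        poly_seq_const) simp_all
  ultimately show ?case
    by simp
qed

lemma poly_seq_partial_sums:
  fixes f :: "nat \<Rightarrow> 'a::field_char_0"
  assumes "poly_seq f"
  shows "poly_seq (\<lambda>n. \<Sum>k<n. f k)"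
proof -
  obtain p where p: "\<And>s. f s = poly p (of_nat s)"
    using assms unfolding poly_seq_def by blast
  have "(\<Sum>k<n. f k) = (\<Sum>j\<le>degree p. coeff p j * (\<Sum>k<n. of_nat k ^ j))" for n
    by (simp add: p poly_altdef sum_distrib_left flip: sum.swap[of _ "{..<n}"])
  then show ?thesis
    by (simp only:) (intro poly_seq_sum poly_seq_mult poly_seq_const poly_seq_power_sums)
qed

lemma poly_seq_by_difference:
  fixes f g :: "nat \<Rightarrow> 'a::field_char_0"
  assumes "poly_seq g" and "\<And>s. f (Suc s) = f s + g s"
  shows "poly_seq f"
proof -
  have "f = (\<lambda>n. f 0 + (\<Sum>k<n. g k))"
  proof
    show "f n = f 0 + (\<Sum>k<n. g k)" for n
      by (induction n) (simp_all add: assms(2))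
  qed
  moreover have "poly_seq (\<lambda>n. f 0 + (\<Sum>k<n. g k))"
    by (intro poly_seq_add poly_seq_const poly_seq_partial_sums assms(1))
  ultimately show ?thesis
    by simp
qed

section \<open>Arrangements of blocks\<close>

definition arrangements :: "('i \<Rightarrow> 'a list) \<Rightarrow> 'i multiset \<Rightarrow> 'a list \<Rightarrow> nat" where
  "arrangements Z A w = card {xs \<in> permutations_of_multiset A. concat (map Z xs) = w}"

abbreviation factorizations :: "'a list multiset \<Rightarrow> 'a list \<Rightarrow> nat" where
  "factorizations \<equiv> arrangements (\<lambda>z. z)"

lemma arrangements_empty: "arrangements Z {#} w = (if w = [] then 1 else 0)"
proof -
  have "{xs \<in> permutations_of_multiset {#}. concat (map Z xs) = w} = (if w = [] then {[]} else {})"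
    by auto
  then show ?thesis
    by (simp add: arrangements_def)
qed

lemma arrangements_nonempty:
  assumes "A \<noteq> {#}"
  shows "arrangements Z A w = (\<Sum>i\<in>set_mset A.
           if take (length (Z i)) w = Z i then arrangements Z (A - {#i#}) (drop (length (Z i)) w) else 0)"
proof -
  define C where "C i = {xs \<in> permutations_of_multiset (A - {#i#}). Z i @ concat (map Z xs) = w}" for i
  have split: "{xs \<in> permutations_of_multiset A. concat (map Z xs) = w} = (\<Union>i\<in>set_mset A. (#) i ` C i)"
    using assms by (subst permutations_of_multiset_nonempty) (auto simp: C_def)
  have "arrangements Z A w = (\<Sum>i\<in>set_mset A. card ((#) i ` C i))"
    unfolding arrangements_def split by (rule card_UN_disjoint) (auto simp: C_def)
  also have "\<dots> = (\<Sum>i\<in>set_mset A. card (C i))"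
    by (simp add: card_image)
  also have "\<dots> = (\<Sum>i\<in>set_mset A.
      if take (length (Z i)) w = Z i then arrangements Z (A - {#i#}) (drop (length (Z i)) w) else 0)"
    by (intro sum.cong refl) (auto simp: C_def arrangements_def append_eq_conv_conj)
  finally show ?thesis .
qed

lemma factorizations_nonempty:
  assumes "M \<noteq> {#}"
  shows "factorizations M w = (\<Sum>z\<in>set_mset M.
    if take (length z) w = z then factorizations (M - {#z#}) (drop (length z) w) else 0)"
  using arrangements_nonempty[OF assms, of "\<lambda>z. z" w] .

lemma mset_eq_if_arrangements_nonzero:
  assumes "arrangements Z A w \<noteq> 0"
  shows "mset w = (\<Sum>i\<in>#A. mset (Z i))"
proof -
  obtain xs where "mset xs = A" "concat (map Z xs) = w"
    using assms by (auto simp: arrangements_def permutations_of_multiset_def card_gt_0_iff)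
  then show ?thesis
    by (auto simp: mset_concat o_def simp flip: sum_mset_sum_list)
qed

lemma length_eq_if_arrangements_nonzero:
  assumes "arrangements Z A w \<noteq> 0"
  shows "length w = (\<Sum>i\<in>#A. length (Z i))"
proof -
  have "size (mset w) = size (\<Sum>i\<in>#A. mset (Z i))"
    using assms by (simp only: mset_eq_if_arrangements_nonzero)
  then show ?thesis
    by (simp add: image_mset.compositionality o_def)
qed

definition count_fact_prod :: "'a multiset \<Rightarrow> nat" where
  "count_fact_prod M = (\<Prod>x\<in>set_mset M. fact (count M x))"

lemma count_fact_prod_remove:
  assumes "x \<in># M"
  shows "count_fact_prod M = count M x * count_fact_prod (M - {#x#})"
proof -
  have "count_fact_prod M = (\<Prod>y\<in>set_mset M. (if y = x then count M x else 1) * fact (count (M - {#x#}) y))"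
    unfolding count_fact_prod_def using assms
    by (intro prod.cong refl) (auto simp: fact_reduce[of "count M x"])
  also have "\<dots> = count M x * (\<Prod>y\<in>set_mset M. fact (count (M - {#x#}) y))"
    using assms by (simp add: prod.distrib)
  also have "(\<Prod>y\<in>set_mset M. fact (count (M - {#x#}) y)) = count_fact_prod (M - {#x#})"
    unfolding count_fact_prod_def
    by (intro prod.mono_neutral_right) (auto simp: not_in_iff dest: in_diffD)
  finally show ?thesis .
qed

lemma count_fact_prod_add_replicate:
  assumes "x \<notin># M"
  shows "count_fact_prod (M + replicate_mset k x) = count_fact_prod M * fact k"
proof (cases "k = 0")
  case False
  then have "set_mset (M + replicate_mset k x) = insert x (set_mset M)"
    by auto
  moreover have "(\<Prod>y\<in>set_mset M. fact (count (M + replicate_mset k x) y)) = count_fact_prod M"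
    unfolding count_fact_prod_def using assms by (intro prod.cong) auto
  ultimately show ?thesis
    using assms by (simp add: count_fact_prod_def not_in_iff)
qed simp

lemma arrangements_mset_set:
  assumes "finite S"
  shows "arrangements Z (mset_set S) w =
    count_fact_prod (image_mset Z (mset_set S)) * factorizations (image_mset Z (mset_set S)) w"
  using assms
proof (induction "card S" arbitrary: S w)
  case 0
  then show ?case
    by (simp add: arrangements_empty count_fact_prod_def)
next
  case (Suc m)
  define M where "M = image_mset Z (mset_set S)"
  define F where "F z = (if take (length z) w = z then factorizations (M - {#z#}) (drop (length z) w) else 0)"
    for z
  have S: "S \<noteq> {}" "finite S"
    using Suc by auto
  then have "M \<noteq> {#}"
    by (simp add: M_def mset_set_empty_iff)
  have mset_set_remove: "mset_set (S - {i}) = mset_set S - {#i#}" if "i \<in> S" for i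
    using that S mset_set_Diff[of S "{i}"] by simp
  have M_remove: "image_mset Z (mset_set (S - {i})) = M - {#Z i#}" if "i \<in> S" for i
    using that S by (simp add: M_def mset_set_remove image_mset_Diff)
  have count_M: "count M z = card {i \<in> S. Z i = z}" for z
    using S by (simp add: M_def count_image_mset' Collect_conj_eq eq_commute)
  have "arrangements Z (mset_set S) w = (\<Sum>i\<in>S. if take (length (Z i)) w = Z i
      then arrangements Z (mset_set S - {#i#}) (drop (length (Z i)) w) else 0)"
    using S by (simp add: arrangements_nonempty mset_set_empty_iff)
  also have "\<dots> = (\<Sum>i\<in>S. count_fact_prod (M - {#Z i#}) * F (Z i))"
  proof (intro sum.cong refl)
    fix i assume "i \<in> S"
    then have "arrangements Z (mset_set S - {#i#}) v =
        count_fact_prod (M - {#Z i#}) * factorizations (M - {#Z i#}) v" for v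
      using Suc.hyps(1)[of "S - {i}"] Suc.hyps(2) S by (simp add: M_remove flip: mset_set_remove)
    then show "(if take (length (Z i)) w = Z i
        then arrangements Z (mset_set S - {#i#}) (drop (length (Z i)) w) else 0) =
        count_fact_prod (M - {#Z i#}) * F (Z i)"
      by (simp add: F_def)
  qed
  also have "\<dots> = (\<Sum>z\<in>set_mset M. card {i \<in> S. Z i = z} * (count_fact_prod (M - {#z#}) * F z))"
    using S by (simp add: sum.image_gen[of S _ Z] M_def)
  also have "\<dots> = (\<Sum>z\<in>set_mset M. count_fact_prod M * F z)"
    by (intro sum.cong refl) (simp add: count_fact_prod_remove[of _ M] count_M)
  also have "\<dots> = count_fact_prod M * factorizations M w"
    using \<open>M \<noteq> {#}\<close> by (simp add: factorizations_nonempty F_def sum_distrib_left)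
  finally show ?case
    by (simp add: M_def)
qed

lemma bij_betw_permutes_permutations_of_set:
  "bij_betw (\<lambda>\<sigma>. map \<sigma> [0..<n]) {\<sigma>. \<sigma> permutes {..<n}} (permutations_of_set {..<n})"
proof -
  have inj: "inj_on (\<lambda>\<sigma>. map \<sigma> [0..<n]) {\<sigma>. \<sigma> permutes {..<n}}"
  proof (rule inj_onI)
    fix \<sigma> \<tau> assume "\<sigma> \<in> {\<sigma>. \<sigma> permutes {..<n}}" "\<tau> \<in> {\<sigma>. \<sigma> permutes {..<n}}"
      and "map \<sigma> [0..<n] = map \<tau> [0..<n]"
    show "\<sigma> = \<tau>"
    proof (rule ext)
      fix x
      show "\<sigma> x = \<tau> x"
      proof (cases "x < n")
        case True
        then show ?thesis
          using \<open>map \<sigma> [0..<n] = map \<tau> [0..<n]\<close> by (simp add: map_eq_conv)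
      next
        case False
        then show ?thesis
          using \<open>\<sigma> \<in> _\<close> \<open>\<tau> \<in> _\<close> by (simp add: permutes_not_in)
      qed
    qed
  qed
  have sub: "(\<lambda>\<sigma>. map \<sigma> [0..<n]) ` {\<sigma>. \<sigma> permutes {..<n}} \<subseteq> permutations_of_set {..<n}"
  proof
    fix xs assume "xs \<in> (\<lambda>\<sigma>. map \<sigma> [0..<n]) ` {\<sigma>. \<sigma> permutes {..<n}}"
    then obtain \<sigma> where "\<sigma> permutes {..<n}" "xs = map \<sigma> [0..<n]"
      by blast
    then show "xs \<in> permutations_of_set {..<n}"
      by (simp add: permutations_of_set_def distinct_map permutes_image permutes_inj_on
          atLeast0LessThan)
  qed
  text \<open>Both sets have n! elements, so the injection is onto.\<close>
  have "card ((\<lambda>\<sigma>. map \<sigma> [0..<n]) ` {\<sigma>. \<sigma> permutes {..<n}}) = card (permutations_of_set {..<n})"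
    by (simp add: card_image[OF inj] card_permutations)
  then show ?thesis
    using inj sub by (simp add: bij_betw_def card_subset_eq)
qed

lemma Pn_coef_eq_factorizations:
  "Pn_coef zs w = of_nat (count_fact_prod (mset zs) * factorizations (mset zs) w)"
proof -
  let ?n = "length zs"
  have "bij_betw (\<lambda>\<sigma>. map \<sigma> [0..<?n])
      {\<sigma> \<in> {\<sigma>. \<sigma> permutes {..<?n}}. concat (map (\<lambda>i. zs ! \<sigma> i) [0..<?n]) = w}
      {xs \<in> permutations_of_set {..<?n}. concat (map ((!) zs) xs) = w}"
    by (rule bij_betw_Collect[OF bij_betw_permutes_permutations_of_set]) (simp add: o_def)
  then have "card {\<sigma>. \<sigma> permutes {..<?n} \<and> concat (map (\<lambda>i. zs ! \<sigma> i) [0..<?n]) = w} =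
      card {xs \<in> permutations_of_set {..<?n}. concat (map ((!) zs) xs) = w}"
    using bij_betw_same_card by force
  also have "\<dots> = arrangements ((!) zs) (mset_set {..<?n}) w"
    by (simp add: arrangements_def permutations_of_set_altdef)
  also have "\<dots> = count_fact_prod (mset zs) * factorizations (mset zs) w"
    using arrangements_mset_set[of "{..<?n}" "(!) zs"]
    by (metis finite_lessThan map_nth mset_map mset_upt atLeast0LessThan)
  finally show ?thesis
    by (simp add: Pn_coef_def)
qed

lemma mset_eq_if_Pn_coef_nonzero:
  assumes "Pn_coef zs u \<noteq> 0"
  shows "mset u = mset (concat zs)"
  using assms mset_eq_if_arrangements_nonzero[of "\<lambda>z. z" "mset zs" u]
  by (auto simp: Pn_coef_eq_factorizations mset_concat o_def simp flip: sum_mset_sum_list)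

section \<open>Factorizations of words with a long run\<close>

lemma factorizations_add_replicate:
  assumes "[a] \<notin># B"
  shows "factorizations (B + replicate_mset (Suc k) [a]) w =
    (if take 1 w = [a] then factorizations (B + replicate_mset k [a]) (drop 1 w) else 0) +
    (\<Sum>z\<in>set_mset B. if take (length z) w = z
       then factorizations (B - {#z#} + replicate_mset (Suc k) [a]) (drop (length z) w) else 0)"
proof -
  define M where "M = B + replicate_mset (Suc k) [a]"
  define F where "F z = (if take (length z) w = z then factorizations (M - {#z#}) (drop (length z) w) else 0)"
    for z
  have "M \<noteq> {#}" "set_mset M = insert [a] (set_mset B)"
    by (auto simp: M_def)
  then have "factorizations M w = F [a] + (\<Sum>z\<in>set_mset B. F z)"
    using assms by (simp add: factorizations_nonempty F_def)
  moreover have "F [a] = (if take 1 w = [a] then factorizations (B + replicate_mset k [a]) (drop 1 w) else 0)"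
    by (simp add: F_def M_def)
  moreover have "F z = (if take (length z) w = z
      then factorizations (B - {#z#} + replicate_mset (Suc k) [a]) (drop (length z) w) else 0)"
    if "z \<in># B" for z
  proof -
    have "M - {#z#} = B - {#z#} + replicate_mset (Suc k) [a]"
      unfolding M_def using that by (metis add.commute multiset_diff_union_assoc single_subset_iff)
    then show ?thesis
      by (simp only: F_def)
  qed
  ultimately show ?thesis
    by (simp add: M_def)
qed

lemma take_drop_append_replicate:
  assumes "l \<le> length g + L"
  shows "take l (g @ replicate (L + s) a @ h) = take l (g @ replicate L a)"
    and "drop l (g @ replicate (L + s) a @ h) = drop l g @ replicate (L - (l - length g) + s) a @ h"
  using assms by (cases "l \<le> length g"; simp add: min_def replicate_add[symmetric])+

lemma factorizations_add_replicate_eq_0: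
  assumes "length w \<noteq> (\<Sum>z\<in>#B. length z) + k"
  shows "factorizations (B + replicate_mset k [a]) w = 0"
  using length_eq_if_arrangements_nonzero[of "\<lambda>z. z" "B + replicate_mset k [a]" w] assms by auto

text \<open>No block reaches beyond the run of a's, so whether it is a prefix of the word does not
  depend on s, and removing it leaves a word of the same shape.\<close>
lemma poly_seq_sum_prefix_blocks:
  assumes "(\<Sum>z\<in>#B. length z) \<le> L"
    and smaller: "\<And>z g L. z \<in># B \<Longrightarrow> (\<Sum>y\<in>#B - {#z#}. length y) \<le> L \<Longrightarrow>
      poly_seq (\<lambda>s. of_nat (factorizations (B - {#z#} + replicate_mset (d + s) [a])
        (g @ replicate (L + s) a @ h)) :: 'a::field_char_0)"
  shows "poly_seq (\<lambda>s. of_nat (\<Sum>z\<in>set_mset B.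
    if take (length z) (g @ replicate (L + s) a @ h) = z then factorizations
      (B - {#z#} + replicate_mset (d + s) [a]) (drop (length z) (g @ replicate (L + s) a @ h))
    else 0) :: 'a)"
  unfolding of_nat_sum
proof (intro poly_seq_sum)
  fix z assume z: "z \<in> set_mset B"
  then have B_sum: "(\<Sum>y\<in>#B. length y) = length z + (\<Sum>y\<in>#B - {#z#}. length y)"
    by (metis image_mset_add_mset insert_DiffM sum_mset.insert)
  then have z_short: "length z \<le> length g + L"
    using assms(1) by linarith
  have "poly_seq (\<lambda>s. of_nat (factorizations (B - {#z#} + replicate_mset (d + s) [a])
      (drop (length z) g @ replicate (L - (length z - length g) + s) a @ h)) :: 'a)"
    using z B_sum assms(1) by (intro smaller) auto
  then show "poly_seq (\<lambda>s. of_nat (if take (length z) (g @ replicate (L + s) a @ h) = z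
      then factorizations (B - {#z#} + replicate_mset (d + s) [a])
        (drop (length z) (g @ replicate (L + s) a @ h)) else 0) :: 'a)"
    unfolding take_drop_append_replicate[OF z_short]
    by (cases "take (length z) (g @ replicate L a) = z") (simp_all add: poly_seq_const)
qed

lemma poly_seq_factorizations_run:
  assumes "[a] \<notin># B" "[] \<notin># B" "(\<Sum>z\<in>#B. length z) \<le> L"
  shows "poly_seq (\<lambda>s. of_nat (factorizations (B + replicate_mset (d + s) [a])
    (g @ replicate (L + s) a @ h)) :: 'a::field_char_0)"
  using assms
proof (induction "size B" arbitrary: B L d g rule: less_induct)
  case less
  define G where "G g d s = (\<Sum>z\<in>set_mset B. if take (length z) (g @ replicate (L + s) a @ h) = z
    then factorizations (B - {#z#} + replicate_mset (d + s) [a])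
      (drop (length z) (g @ replicate (L + s) a @ h)) else 0)" for g d s
  have G: "poly_seq (\<lambda>s. of_nat (G g d s) :: 'a)" for g d
    unfolding G_def using less.prems
    by (intro poly_seq_sum_prefix_blocks less.hyps) (auto simp: size_Diff1_less dest: in_diffD)
  show ?case
  proof (induction g arbitrary: d)
    case Nil
    have "(of_nat (factorizations (B + replicate_mset (d + Suc s) [a]) (replicate (L + Suc s) a @ h)) :: 'a) =
        of_nat (factorizations (B + replicate_mset (d + s) [a]) (replicate (L + s) a @ h)) +
        of_nat (G [] d (Suc s))" for s
      using factorizations_add_replicate[OF less.prems(1), of "d + s"]
      by (simp add: G_def cong: if_cong)
    then show ?case
      by (intro poly_seq_by_difference[OF poly_seq_Suc[OF G[of "[]" d]]]) simp
  next
    case (Cons x g)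
    show ?case
    proof (cases "length (x # g) + L + length h = (\<Sum>z\<in>#B. length z) + d")
      case False
      then show ?thesis
        by (simp add: factorizations_add_replicate_eq_0 poly_seq_const)
    next
      case True
      then obtain d' where d: "d = Suc d'"
        using less.prems(3) by (cases d) auto
      have "factorizations (B + replicate_mset (d + s) [a]) (x # g @ replicate (L + s) a @ h) =
          (if x = a then factorizations (B + replicate_mset (d' + s) [a]) (g @ replicate (L + s) a @ h)
           else 0) + G (x # g) d s" for s
        using factorizations_add_replicate[OF less.prems(1), of "d' + s"]
        by (simp add: G_def d cong: if_cong)
      then show ?thesis
        using Cons.IH[of d'] G[of "x # g" d] by (cases "x = a") (simp_all add: poly_seq_add)
    qed
  qed
qed

section \<open>The central part\<close>

lemma finite_runs: "finite {r. \<exists>i. run_at u i r}"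
  by (rule finite_subset[of _ "{..length u}"]) (auto simp: run_at_def)

lemma run_at_le_central_len: "run_at u i r \<Longrightarrow> r \<le> central_len u"
  unfolding central_len_def using finite_runs by (intro Max_ge) auto

lemma run_at_central: "run_at u (central_start u) (central_len u)"
proof -
  have "run_at u 0 0"
    by (simp add: run_at_def)
  then have "central_len u \<in> {r. \<exists>i. run_at u i r}"
    unfolding central_len_def using finite_runs by (intro Max_in) auto
  then show ?thesis
    unfolding central_start_def by (auto intro: LeastI_ex)
qed

lemma ushift_eq:
  "ushift s u = take (central_start u) u @ replicate (central_len u + s) 1 @
     drop (central_start u + central_len u) u"
proof -
  have "take (central_len u) (drop (central_start u) u) = replicate (central_len u) 1"
    using run_at_central[of u] by (intro nth_equalityI) (auto simp: run_at_def)
  then have "drop (central_start u) u =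
      replicate (central_len u) 1 @ drop (central_start u + central_len u) u"
    by (metis append_take_drop_id drop_drop add.commute)
  then show ?thesis
    by (simp add: ushift_def replicate_add[symmetric] add.commute)
qed

lemma count_ones_le_if_no_run:
  assumes "k \<le> c" "\<And>i. \<not> run_at (replicate k 1 @ u) i (Suc c)"
  shows "k + length (filter (\<lambda>x. x = 1) u) \<le> c * (length (filter (\<lambda>x. x \<noteq> 1) u) + 1)"
  using assms
proof (induction u arbitrary: k)
  case Nil
  then show ?case by simp
next
  case (Cons x u)
  show ?case
  proof (cases "x = 1")
    case True
    then have word: "replicate k 1 @ x # u = replicate (Suc k) 1 @ u"
      by (simp add: replicate_app_Cons_same)
    have "Suc k \<le> c"
    proof (rule ccontr)
      assume "\<not> Suc k \<le> c"
      then have "c = k"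
        using Cons.prems(1) by simp
      moreover have "run_at (replicate (Suc k) 1 @ u) 0 (Suc k)"
        by (simp add: run_at_def nth_append del: replicate_Suc)
      ultimately have "run_at (replicate k 1 @ x # u) 0 (Suc c)"
        unfolding word by simp
      then show False
        using Cons.prems(2) by blast
    qed
    then show ?thesis
      using Cons.IH[of "Suc k"] Cons.prems(2) True unfolding word by simp
  next
    case False
    have "\<not> run_at u i (Suc c)" for i
    proof
      assume "run_at u i (Suc c)"
      then have "run_at (replicate k 1 @ x # u) (Suc k + i) (Suc c)"
        by (auto simp: run_at_def nth_append)
      then show False
        using Cons.prems(2) by blast
    qed
    then show ?thesis
      using Cons.IH[of 0] Cons.prems(1) False by simp
  qed
qed

text \<open>The k letters different from 1 cut u into at most k + 1 maximal runs of 1.\<close>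
lemma count_ones_le_central_len:
  "length (filter (\<lambda>x. x = 1) u) \<le> central_len u * (length (filter (\<lambda>x. x \<noteq> 1) u) + 1)"
  using count_ones_le_if_no_run[of 0 "central_len u" u] run_at_le_central_len[of u] by force

lemma central_len_ge_if_few_non_ones:
  assumes "length (filter (\<lambda>x. x \<noteq> 1) u) \<le> q" and "b * (q + 1) + q \<le> length u"
  shows "b \<le> central_len u"
proof (rule ccontr)
  assume "\<not> b \<le> central_len u"
  then have "(central_len u + 1) * (q + 1) \<le> b * (q + 1)"
    by (intro mult_le_mono1) simp
  moreover have "length (filter (\<lambda>x. x = 1) u) \<le> central_len u * (q + 1)"
    using count_ones_le_central_len[of u] assms(1) by (meson add_le_mono1 le_trans mult_le_mono2)
  moreover have "length (filter (\<lambda>x. x = 1) u) + length (filter (\<lambda>x. x \<noteq> 1) u) = length u"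
    by (rule sum_length_filter_compl)
  ultimately show False
    using assms by (simp add: algebra_simps)
qed

lemma fact_add_eq_fact_mult_pochhammer: "fact (s + d) = fact s * pochhammer (of_nat s + 1) d"
  unfolding pochhammer_fact pochhammer_product' by (simp add: add.commute)

lemma Pn_coef_append_replicate_ushift:
  assumes "[] \<notin> set zs" "(\<Sum>z\<leftarrow>filter (\<lambda>z. z \<noteq> [1]) zs. length z) \<le> central_len u"
  shows "\<exists>p. \<forall>s. (Pn_coef (zs @ replicate s [1]) (ushift s u) :: 'a::field_char_0) = poly p (of_nat s) * fact s"
proof -
  define B where "B = filter_mset (\<lambda>z. z \<noteq> [1]) (mset zs)"
  define d where "d = count (mset zs) [1]"
  define g where "g = take (central_start u) u"
  define h where "h = drop (central_start u + central_len u) u"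
  have mset_eq: "mset (zs @ replicate s [1]) = B + replicate_mset (d + s) [1]" for s
    by (simp add: multiset_eq_iff B_def d_def)
  have B: "[1] \<notin># B" "[] \<notin># B" "(\<Sum>z\<in>#B. length z) \<le> central_len u"
    using assms by (auto simp: B_def simp flip: sum_mset_sum_list mset_filter)
  obtain p :: "'a poly" where p: "\<And>s. of_nat (factorizations (B + replicate_mset (d + s) [1])
      (g @ replicate (central_len u + s) 1 @ h)) = poly p (of_nat s)"
    using poly_seq_factorizations_run[OF B] unfolding poly_seq_def by blast
  obtain q :: "'a poly" where q: "\<And>s. pochhammer (of_nat s + 1) d = poly q (of_nat s)"
    using poly_seq_pochhammer unfolding poly_seq_def by blast
  have "(Pn_coef (zs @ replicate s [1]) (ushift s u) :: 'a) =
      poly (smult (of_nat (count_fact_prod B)) (q * p)) (of_nat s) * fact s" for s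
  proof -
    have "(Pn_coef (zs @ replicate s [1]) (ushift s u) :: 'a) = of_nat (count_fact_prod
        (B + replicate_mset (d + s) [1]) * factorizations (B + replicate_mset (d + s) [1]) (ushift s u))"
      by (simp only: Pn_coef_eq_factorizations mset_eq)
    also have "\<dots> = of_nat (count_fact_prod B) * fact (s + d) * poly p (of_nat s)"
      using B(1) by (simp add: count_fact_prod_add_replicate ushift_eq g_def h_def add.commute
          flip: p)
    finally show ?thesis
      by (simp add: q fact_add_eq_fact_mult_pochhammer)
  qed
  then show ?thesis
    by blast
qed

section \<open>Tableaux and ordered partitions\<close>

lemma sum_list_shift_first: "sum_list (shift_first t \<mu>) = t + sum_list \<mu>"
  by (cases \<mu>) (auto simp: shift_first_def)

lemma first_row_subset_diagram_shift_first: "{1} \<times> {1..t} \<subseteq> diagram (shift_first t \<mu>)"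
  by (cases \<mu>) (auto simp: shift_first_def diagram_def)

lemma card_entries_below_first_row:
  assumes "standard_tableau \<nu> T" and first_row: "{1} \<times> {1..t} \<subseteq> diagram \<nu>"
  shows "card {j \<in> {1..sum_list \<nu>}. row_of \<nu> T j \<noteq> 1} + t \<le> sum_list \<nu>"
proof -
  let ?cell = "the_inv_into (diagram \<nu>) T"
  let ?J = "{j \<in> {1..sum_list \<nu>}. row_of \<nu> T j \<noteq> 1}"
  have bij: "bij_betw ?cell {1..sum_list \<nu>} (diagram \<nu>)"
    using assms(1) by (simp add: standard_tableau_def bij_betw_the_inv_into)
  then have fin: "finite (diagram \<nu>)" and card_diagram: "card (diagram \<nu>) = sum_list \<nu>"
    using bij_betw_finite[OF bij] bij_betw_same_card[OF bij] by auto
  have "inj_on ?cell ?J"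
    using bij_betw_imp_inj_on[OF bij] by (rule inj_on_subset) auto
  then have "card ?J = card (?cell ` ?J)"
    by (simp add: card_image)
  also have "\<dots> \<le> card (diagram \<nu> - {1} \<times> {1..t})"
  proof (rule card_mono)
    show "?cell ` ?J \<subseteq> diagram \<nu> - {1} \<times> {1..t}"
      using bij_betwE[OF bij] by (force simp: row_of_def)
  qed (use fin in simp)
  also have "\<dots> = sum_list \<nu> - t"
    using first_row fin by (simp add: card_Diff_subset card_diagram card_cartesian_product)
  finally show ?thesis
    using card_mono[OF fin first_row] by (simp add: card_diagram card_cartesian_product)
qed

lemma sub_blocks_Omega:
  assumes "Os \<in> Omega n m"
  shows "length (sub_blocks \<nu> T Os) = n" "[] \<notin> set (sub_blocks \<nu> T Os)"
    and "length (concat (sub_blocks \<nu> T Os)) = m"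
proof -
  have "length (concat Os) = m"
    using assms distinct_card[of "concat Os"] by (simp add: Omega_def)
  then show "length (concat (sub_blocks \<nu> T Os)) = m"
    by (simp add: sub_blocks_def length_concat o_def)
qed (use assms in \<open>auto simp: Omega_def sub_blocks_def\<close>)

lemma count_non_first_row_sub_blocks:
  assumes "standard_tableau \<nu> T" "{1} \<times> {1..t} \<subseteq> diagram \<nu>" "Os \<in> Omega n (sum_list \<nu>)"
  shows "length (filter (\<lambda>x. x \<noteq> 1) (concat (sub_blocks \<nu> T Os))) + t \<le> sum_list \<nu>"
proof -
  have "length (filter (\<lambda>x. x \<noteq> 1) (concat (sub_blocks \<nu> T Os))) =
      length (filter (\<lambda>j. row_of \<nu> T j \<noteq> 1) (concat Os))"
    by (simp add: sub_blocks_def filter_map o_def flip: map_concat)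
  also have "\<dots> = card {j \<in> {1..sum_list \<nu>}. row_of \<nu> T j \<noteq> 1}"
    using assms(3) by (simp add: Omega_def distinct_length_filter Int_def conj_commute)
  finally show ?thesis
    using card_entries_below_first_row[OF assms(1,2)] by simp
qed

lemma count_non_ones_sub_blocks_shift_first:
  assumes "standard_tableau (shift_first t \<mu>) T" "Os \<in> Omega n (t + sum_list \<mu>)"
  shows "length (filter (\<lambda>x. x \<noteq> 1) (concat (sub_blocks (shift_first t \<mu>) T Os))) \<le> sum_list \<mu>"
  using count_non_first_row_sub_blocks[OF assms(1) first_row_subset_diagram_shift_first] assms(2)
  by (simp add: sum_list_shift_first)

lemma sum_length_filter_non_singleton:
  assumes "[] \<notin> set zs"
  shows "(\<Sum>z\<leftarrow>filter (\<lambda>z. z \<noteq> [a]) zs. length z) + 2 * length zs \<le>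
    2 * length (concat zs) + length (filter (\<lambda>x. x \<noteq> a) (concat zs))"
  using assms
proof (induction zs)
  case (Cons z zs)
  have "2 \<le> length z + length (filter (\<lambda>x. x \<noteq> a) z)" if "z \<noteq> [a]"
    using Cons.prems that by (cases z rule: remdups_adj.cases) auto
  then show ?case
    using Cons by auto
qed simp

theorem lemma4p23:
  fixes K :: nat and \<mu> :: "nat list"
  assumes "is_partition \<mu>" and "sum_list \<mu> = 4 * K"
  shows "\<exists>M \<ge> 3 * K. \<forall>n \<ge> M. \<forall>T Os.
           standard_tableau (shift_first (n - 3 * K) \<mu>) T \<and> Os \<in> Omega n (n + K) \<longrightarrow>
           (\<forall>u. (Pn_coef (sub_blocks (shift_first (n - 3 * K) \<mu>) T Os) u :: 'a::field_char_0) \<noteq> 0 \<longrightarrow>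
              (\<exists>p :: 'a poly. \<forall>s :: nat.
                 Pn_coef (sub_blocks (shift_first (n - 3 * K) \<mu>) T Os @ replicate s [1]) (ushift s u)
                   = poly p (of_nat s) * fact s))"
proof (intro exI[of _ "3 * K + 6 * K * (4 * K + 1)"] conjI allI impI)
  \<comment> \<open>Only the size of \<mu> matters.\<close>
  fix n T Os u
  assume n: "3 * K + 6 * K * (4 * K + 1) \<le> n"
    and TO: "standard_tableau (shift_first (n - 3 * K) \<mu>) T \<and> Os \<in> Omega n (n + K)"
    and u: "(Pn_coef (sub_blocks (shift_first (n - 3 * K) \<mu>) T Os) u :: 'a) \<noteq> 0"
  define zs where "zs = sub_blocks (shift_first (n - 3 * K) \<mu>) T Os"
  have zs: "length zs = n" "[] \<notin> set zs" "length (concat zs) = n + K"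
    using sub_blocks_Omega TO by (auto simp: zs_def)
  have non_ones: "length (filter (\<lambda>x. x \<noteq> 1) (concat zs)) \<le> 4 * K"
    using count_non_ones_sub_blocks_shift_first[of "n - 3 * K" \<mu> T Os n] TO n assms(2)
    by (simp add: zs_def add.commute)
  have "mset u = mset (concat zs)"
    using mset_eq_if_Pn_coef_nonzero u by (simp add: zs_def)
  then have "length u = n + K" "length (filter P u) = length (filter P (concat zs))" for P
    using zs(3) by (metis size_mset, metis mset_filter size_mset)
  then have "6 * K \<le> central_len u"
    using non_ones n by (intro central_len_ge_if_few_non_ones[where q = "4 * K"]) simp_all
  moreover have "(\<Sum>z\<leftarrow>filter (\<lambda>z. z \<noteq> [1]) zs. length z) \<le> 6 * K"
    using sum_length_filter_non_singleton[OF zs(2), of 1] zs non_ones by simp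
  ultimately have "(\<Sum>z\<leftarrow>filter (\<lambda>z. z \<noteq> [1]) zs. length z) \<le> central_len u"
    by linarith
  then show "\<exists>p. \<forall>s. Pn_coef (sub_blocks (shift_first (n - 3 * K) \<mu>) T Os @ replicate s [1])
      (ushift s u) = poly p (of_nat s) * (fact s :: 'a)"
    unfolding zs_def by (rule Pn_coef_append_replicate_ushift[OF zs(2)[unfolded zs_def]])
qed simp

end
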